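(* There is a constant $N>0$ such that for every discriminant $D\in\mathcal{O}_d$ with $|D|>N$ the following holds. Let $\epsilon_D$ be a fundamental solution of $t^2-u^2D=4$, write $\epsilon_D^{\,n+1}=\frac12(t_n+u_n\sqrt{D})$ with $t_n,u_n\in\mathcal{O}_d$ for $n\ge0$, and let $m(\epsilon_D)=\min\{n\ge0 : |t_n|<\frac49|u_n|^2\}$ (which exists and lies in $\{0,1,2\}$). If $m(\epsilon_D)\neq 0$, then $|u_{m(\epsilon_D)}|\le 30|D|^{3/2}$.
   Context: $d\in\{1,2,3,7,11,19,43,67,163\}$ (so $k_d=\mathbb{Q}(\sqrt{-d})$ has class number one), $\mathcal{O}_d$ is the ring of integers of $k_d$. An element $D\in\mathcal{O}_d$ is a discriminant if $D$ is not a perfect square in $\mathcal{O}_d$ and $D\equiv x^2\pmod{4\mathcal{O}_d}$ for some $x\in\mathcal{O}_d$. The square root $\sqrt{D}$ is chosen with argument in $[0,\pi)$. For a solution $(t,u)\in\mathcal{O}_d^2$ of $t^2-u^2D=4$ set $\epsilon_{t,u}=\frac12(t+u\sqrt{D})$. A solution $(t_0,u_0)$ is fundamental if $|\epsilon_{t_0,u_0}|$ is the smallest value larger than $1$ among all $|\epsilon_{t,u}|$; then $\epsilon_D=\epsilon_{t_0,u_0}$. *)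

theory Defs
  imports "HOL-Analysis.Analysis"
begin

text \<open>Imaginary quadratic fields of class number one.\<close>
definition class_one_d :: "nat set" where
  "class_one_d = {1, 2, 3, 7, 11, 19, 43, 67, 163}"

definition omega_d :: "nat \<Rightarrow> complex" where
  "omega_d d = (if d mod 4 = 3 then (1 + \<i> * complex_of_real (sqrt (real d))) / 2
                else \<i> * complex_of_real (sqrt (real d)))"

definition O_d :: "nat \<Rightarrow> complex set" where
  "O_d d = {of_int a + of_int b * omega_d d | a b. True}"

definition is_discriminant :: "nat \<Rightarrow> complex \<Rightarrow> bool" where
  "is_discriminant d D \<longleftrightarrow> D \<in> O_d d \<and> \<not> (\<exists>x\<in>O_d d. x ^ 2 = D)
     \<and> (\<exists>x\<in>O_d d. \<exists>y\<in>O_d d. D - x ^ 2 = 4 * y)"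

definition sqrtD :: "complex \<Rightarrow> complex" where
  "sqrtD D = (THE s. s ^ 2 = D \<and> 0 \<le> Arg s \<and> Arg s < pi)"

definition eps_tu :: "complex \<Rightarrow> complex \<Rightarrow> complex \<Rightarrow> complex" where
  "eps_tu D t u = (t + u * sqrtD D) / 2"

definition pell_sol :: "nat \<Rightarrow> complex \<Rightarrow> complex \<Rightarrow> complex \<Rightarrow> bool" where
  "pell_sol d D t u \<longleftrightarrow> t \<in> O_d d \<and> u \<in> O_d d \<and> t ^ 2 - u ^ 2 * D = 4"

definition fundamental_sol :: "nat \<Rightarrow> complex \<Rightarrow> complex \<Rightarrow> complex \<Rightarrow> bool" where
  "fundamental_sol d D t0 u0 \<longleftrightarrow> pell_sol d D t0 u0 \<and> cmod (eps_tu D t0 u0) > 1 \<and>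
     (\<forall>t u. pell_sol d D t u \<and> cmod (eps_tu D t u) > 1 \<longrightarrow>
        cmod (eps_tu D t0 u0) \<le> cmod (eps_tu D t u))"

end

theory Submission
  imports Defs "HOL-Computational_Algebra.Squarefree"
begin

(* Write epsilon_D = (t + u sqrt D)/2. From t^2 - u^2 D = 4 one gets
   epsilon_D^2 = ((t^2 - 2) + t u sqrt D)/2 and epsilon_D^3 = ((t^3 - 3 t) + u (t^2 - 1) sqrt D)/2,
   and these are the coordinates (t_1, u_1) and (t_2, u_2): O_d is integrally closed and sqrt D is
   not in O_d, so sqrt D is not in the fraction field either and 1, sqrt D are independent over O_d.
   Since u is a nonzero element of O_d, |u| >= 1, and the Pell equation gives
   | |t|^2 - |u|^2 |D| | <= 4. If m = 1, then |t| >= 4/9 |u|^2 forces |u|^2 <= 6 |D|, whence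
   |u_1| = |t| |u| <= 30 |D|^(3/2). If neither n = 0 nor n = 1 qualifies, then
   4/9 |t|^2 |u|^2 <= |t|^2 + 2 forces |u|^2 <= 3 and |t| >= 14; then n = 2 qualifies and
   |u_2| <= |u| (|t|^2 + 1) <= 30 |D|^(3/2). So N = 200 works. *)

section \<open>Half-integral coordinates on O_d\<close>

definition sqrt_neg :: "nat \<Rightarrow> complex" where
  "sqrt_neg d = \<i> * complex_of_real (sqrt (real d))"

lemma sqrt_neg_square: "sqrt_neg d ^ 2 = - of_nat d"
  by (simp add: sqrt_neg_def power_mult_distrib flip: of_real_power)

lemma sqrt_neg_coords_eq_iff:
  assumes "d > 0"
  shows "of_int a + of_int b * sqrt_neg d = of_int a' + of_int b' * sqrt_neg d
    \<longleftrightarrow> a = a' \<and> b = b'"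
  using assms by (auto simp: complex_eq_iff sqrt_neg_def)

lemma omega_d_eq: "omega_d d = (if d mod 4 = 3 then (1 + sqrt_neg d) / 2 else sqrt_neg d)"
  unfolding omega_d_def sqrt_neg_def by simp

lemma omega_d_square: "\<exists>c0 c1::int. omega_d d ^ 2 = of_int c0 + of_int c1 * omega_d d"
proof (cases "d mod 4 = 3")
  case True
  define k where "k = int d div 4"
  have "int d = 4 * k + 3" using True unfolding k_def by presburger
  then have d: "of_nat d = (4 * of_int k + 3 :: complex)"
    by (metis of_int_of_nat_eq of_int_add of_int_mult of_int_numeral)
  have "omega_d d ^ 2 - (of_int (- k - 1) + omega_d d) = (sqrt_neg d ^ 2 + (4 * of_int k + 3)) / 4"
    using True by (simp add: omega_d_eq field_simps power2_eq_square)
  also have "\<dots> = 0"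
    by (simp add: sqrt_neg_square flip: d)
  finally have "omega_d d ^ 2 = of_int (- k - 1) + of_int 1 * omega_d d" by simp
  then show ?thesis by blast
next
  case False
  then have "omega_d d ^ 2 = of_int (- int d) + of_int 0 * omega_d d"
    by (simp add: omega_d_eq sqrt_neg_square)
  then show ?thesis by blast
qed

lemma O_d_of_int [simp]: "of_int k \<in> O_d d"
  unfolding O_d_def by (rule CollectI, rule exI[of _ k], rule exI[of _ 0]) simp

lemma O_d_numeral [simp]: "numeral k \<in> O_d d"
  using O_d_of_int[of "numeral k" d] by simp

lemma O_d_one [simp]: "1 \<in> O_d d"
  using O_d_of_int[of 1 d] by simp

lemma O_d_diff: "x \<in> O_d d \<Longrightarrow> y \<in> O_d d \<Longrightarrow> x - y \<in> O_d d"
proof -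
  assume "x \<in> O_d d" "y \<in> O_d d"
  then obtain a b a' b'
    where "x = of_int a + of_int b * omega_d d" "y = of_int a' + of_int b' * omega_d d"
    unfolding O_d_def by auto
  then have "x - y = of_int (a - a') + of_int (b - b') * omega_d d" by (simp add: algebra_simps)
  then show ?thesis unfolding O_d_def by blast
qed

lemma O_d_mult: "x \<in> O_d d \<Longrightarrow> y \<in> O_d d \<Longrightarrow> x * y \<in> O_d d"
proof -
  assume "x \<in> O_d d" "y \<in> O_d d"
  then obtain a b a' b'
    where xy: "x = of_int a + of_int b * omega_d d" "y = of_int a' + of_int b' * omega_d d"
    unfolding O_d_def by auto
  obtain c0 c1 where c: "omega_d d ^ 2 = of_int c0 + of_int c1 * omega_d d"
    using omega_d_square by blast
  have "x * y = of_int (a * a') + of_int (a * b' + a' * b) * omega_d d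
      + of_int (b * b') * omega_d d ^ 2"
    using xy by (simp add: algebra_simps power2_eq_square)
  also have "\<dots> = of_int (a * a' + b * b' * c0) + of_int (a * b' + a' * b + b * b' * c1) * omega_d d"
    unfolding c by (simp add: algebra_simps)
  finally show ?thesis unfolding O_d_def by blast
qed

lemma O_d_power: "x \<in> O_d d \<Longrightarrow> x ^ n \<in> O_d d"
  by (induction n) (auto intro: O_d_mult)

definition integral_coords :: "nat \<Rightarrow> int \<Rightarrow> int \<Rightarrow> bool" where
  "integral_coords d A B \<longleftrightarrow> (if d mod 4 = 3 then even (A - B) else even A \<and> even B)"

lemma O_d_iff_integral_coords:
  "z \<in> O_d d \<longleftrightarrow> (\<exists>A B. z = (of_int A + of_int B * sqrt_neg d) / 2 \<and> integral_coords d A B)"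
proof
  assume "z \<in> O_d d"
  then obtain a b where z: "z = of_int a + of_int b * omega_d d" unfolding O_d_def by auto
  show "\<exists>A B. z = (of_int A + of_int B * sqrt_neg d) / 2 \<and> integral_coords d A B"
  proof (cases "d mod 4 = 3")
    case True
    then have "z = (of_int (2 * a + b) + of_int b * sqrt_neg d) / 2
        \<and> integral_coords d (2 * a + b) b"
      using z by (simp add: omega_d_eq integral_coords_def field_simps)
    then show ?thesis by blast
  next
    case False
    then have "z = (of_int (2 * a) + of_int (2 * b) * sqrt_neg d) / 2
        \<and> integral_coords d (2 * a) (2 * b)"
      using z by (simp add: omega_d_eq integral_coords_def field_simps)
    then show ?thesis by blast
  qed
next
  assume "\<exists>A B. z = (of_int A + of_int B * sqrt_neg d) / 2 \<and> integral_coords d A B"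
  then obtain A B
    where z: "z = (of_int A + of_int B * sqrt_neg d) / 2" and AB: "integral_coords d A B"
    by blast
  show "z \<in> O_d d"
  proof (cases "d mod 4 = 3")
    case True
    then have "even (A - B)" using AB by (simp add: integral_coords_def)
    then obtain k where "A - B = 2 * k" by (rule evenE)
    then have "z = of_int k + of_int B * omega_d d"
      using True z by (simp add: omega_d_eq field_simps)
    then show ?thesis unfolding O_d_def by blast
  next
    case False
    then obtain k l where "A = 2 * k" "B = 2 * l"
      using AB by (auto simp: integral_coords_def elim!: evenE)
    then have "z = of_int k + of_int l * omega_d d"
      using False z by (simp add: omega_d_eq add_divide_distrib)
    then show ?thesis unfolding O_d_def by blast
  qed
qed

lemma four_dvd_norm_if_integral_coords:
  assumes "integral_coords d A B"
  shows "4 dvd A^2 + int d * B^2"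
proof (cases "d mod 4 = 3")
  case True
  then have "even (A - B)" using assms by (simp add: integral_coords_def)
  then obtain k where "A - B = 2 * k" by (rule evenE)
  then have k: "A = B + 2 * k" by simp
  define j where "j = (int d + 1) div 4"
  have j: "int d = 4 * j - 1" using True unfolding j_def by presburger
  have "A^2 + int d * B^2 = 4 * (j * B^2 + k * B + k^2)"
    unfolding k j by (simp add: algebra_simps power2_eq_square)
  then show ?thesis by simp
next
  case False
  then obtain k l where "A = 2 * k" "B = 2 * l"
    using assms by (auto simp: integral_coords_def elim!: evenE)
  then have "A^2 + int d * B^2 = 4 * (k^2 + int d * l^2)"
    by (simp add: algebra_simps power2_eq_square)
  then show ?thesis by simp
qed

section \<open>Integral closure and independence of 1 and sqrt D\<close>

lemma class_one_d_pos: "d \<in> class_one_d \<Longrightarrow> 0 < d"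
  by (auto simp: class_one_d_def)

lemma squarefree_class_one_d:
  assumes "d \<in> class_one_d"
  shows "squarefree (int d)"
proof (rule squarefreeI)
  fix x :: int
  define k where "k = nat \<bar>x\<bar>"
  assume "x^2 dvd int d"
  then have dvd: "k^2 dvd d"
    unfolding k_def by (metis int_dvd_int_iff nat_0_le power2_abs abs_ge_zero of_nat_power)
  have "0 < d" "d \<le> 163" using assms by (auto simp: class_one_d_def)
  then have "k^2 < 13^2" using dvd_imp_le[OF dvd] by simp
  then have "k < 13" by (rule power_less_imp_less_base) simp
  then have "k \<in> {0, 1, 2, 3, 4, 5, 6, 7, 8, 9, 10, 11, 12}" by simp presburger
  then have "k = 1"
    using dvd assms unfolding class_one_d_def by (auto simp: dvd_eq_mod_eq_0)
  then show "x dvd 1" unfolding k_def by simp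
qed

lemma dvd_if_square_dvd_squarefree_mult:
  fixes c n p :: int
  assumes c: "squarefree c" and dvd: "n^2 dvd c * p^2"
  shows "n dvd p"
proof (cases "n = 0")
  case True
  then show ?thesis using dvd c by auto
next
  case False
  define g where "g = gcd n p"
  have "g \<noteq> 0" using False unfolding g_def by simp
  obtain n' p' where np: "n = n' * g" "p = p' * g" and "coprime n' p'"
    using gcd_coprime_exists[of n p] False unfolding g_def by auto
  have "n'^2 * g^2 dvd (c * p'^2) * g^2"
    using dvd unfolding np by (simp add: power_mult_distrib mult.assoc)
  then have "n'^2 dvd c * p'^2" using \<open>g \<noteq> 0\<close> by simp
  moreover have "coprime (n'^2) (p'^2)" using \<open>coprime n' p'\<close> by simp
  ultimately have "n'^2 dvd c" by (simp add: coprime_dvd_mult_left_iff)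
  then have "is_unit n'" by (rule squarefreeD[OF c])
  moreover have "g dvd p" unfolding g_def by simp
  ultimately show ?thesis unfolding np(1) by (simp add: mult_unit_dvd_iff')
qed

lemma dvd_coords_if_square_dvd_coords:
  fixes n p q :: int
  assumes d: "d \<in> class_one_d" and re: "n^2 dvd p^2 - int d * q^2" and im: "n^2 dvd p * q"
  shows "n dvd p \<and> n dvd q"
proof -
  have "(p^2 + int d * q^2)^2 = (p^2 - int d * q^2)^2 + 4 * int d * (p * q)^2"
    by (simp add: power2_eq_square algebra_simps)
  moreover have "(n^2)^2 dvd (p^2 - int d * q^2)^2 + 4 * int d * (p * q)^2"
    using dvd_power_same[OF re] dvd_mult[OF dvd_power_same[OF im]] by (rule dvd_add)
  ultimately have "(n^2)^2 dvd (p^2 + int d * q^2)^2" by simp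
  then have norm: "n^2 dvd p^2 + int d * q^2" by (subst (asm) pow_divides_pow_iff) auto
  have "2 * p^2 = (p^2 + int d * q^2) + (p^2 - int d * q^2)" by simp
  then have "n^2 dvd 2 * p^2" using norm re by (metis dvd_add)
  moreover have "squarefree (2::int)"
    using squarefree_class_one_d[of 2] by (simp add: class_one_d_def)
  ultimately have "n dvd p" by (rule dvd_if_square_dvd_squarefree_mult[rotated])
  have "int d * q^2 = (p^2 + int d * q^2) - p^2" by simp
  then have "n^2 dvd int d * q^2" using norm dvd_power_same[OF \<open>n dvd p\<close>] by (metis dvd_diff)
  then have "n dvd q"
    using dvd_if_square_dvd_squarefree_mult squarefree_class_one_d[OF d] by blast
  with \<open>n dvd p\<close> show ?thesis ..
qed

lemma integral_coords_if_square:
  assumes d: "d \<in> class_one_d" and AB: "integral_coords d A B"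
    and re: "X^2 - int d * Y^2 = 2 * A" and im: "X * Y = B"
  shows "integral_coords d X Y"
proof (cases "d mod 4 = 3")
  case True
  then have "odd (int d)" by presburger
  moreover have "even (X^2 - int d * Y^2)" using re by simp
  ultimately have "even (X - Y)" by auto
  then show ?thesis using True by (simp add: integral_coords_def)
next
  case False
  then have "d = 1 \<or> d = 2" using d by (auto simp: class_one_d_def)
  obtain A' where A': "A = 2 * A'" using False AB by (auto simp: integral_coords_def elim: evenE)
  have "even X \<and> even Y"
  proof (cases "d = 1")
    case True
    have "even (X * Y)" using False AB im by (simp add: integral_coords_def)
    moreover have "even (X^2 - Y^2)" using re True by simp
    ultimately show ?thesis by auto
  next
    case False
    with \<open>d = 1 \<or> d = 2\<close> have "X^2 - 2 * Y^2 = 4 * A'" using re A' by simp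
    then have "X^2 = 2 * (Y^2 + 2 * A')" by simp
    then have "even X" by (metis dvd_triv_left even_power pos2)
    then obtain X' where X': "X = 2 * X'" by (rule evenE)
    have "Y^2 = 2 * (X'^2 - A')" using \<open>X^2 - 2 * Y^2 = 4 * A'\<close> unfolding X'
      by (simp add: algebra_simps power2_eq_square)
    then have "even Y" by (metis dvd_triv_left even_power pos2)
    with \<open>even X\<close> show ?thesis ..
  qed
  then show ?thesis using False by (simp add: integral_coords_def)
qed

lemma O_d_if_square_in_O_d:
  assumes d: "d \<in> class_one_d" and "n \<noteq> 0"
    and z: "z = (of_int p + of_int q * sqrt_neg d) / of_int n" and z2: "z^2 \<in> O_d d"
  shows "z \<in> O_d d"
proof -
  let ?r = "sqrt_neg d"
  have r2: "?r * ?r = - of_nat d" using sqrt_neg_square[of d] by (simp add: power2_eq_square)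
  obtain A B where AB: "z^2 = (of_int A + of_int B * ?r) / 2" "integral_coords d A B"
    using z2 O_d_iff_integral_coords by blast
  have "of_int (2 * (p^2 - int d * q^2)) + of_int (4 * p * q) * ?r
      = 2 * (of_int p + of_int q * ?r)^2"
    by (simp add: algebra_simps power2_eq_square r2)
  also have "\<dots> = 2 * (of_int n)^2 * z^2" using z \<open>n \<noteq> 0\<close> by (simp add: power_divide)
  also have "\<dots> = of_int (A * n^2) + of_int (B * n^2) * ?r"
    unfolding AB(1) by (simp add: algebra_simps)
  finally have "2 * (p^2 - int d * q^2) = A * n^2 \<and> 4 * p * q = B * n^2"
    using sqrt_neg_coords_eq_iff class_one_d_pos[OF d] by blast
  then have re: "(2 * p)^2 - int d * (2 * q)^2 = 2 * A * n^2" and im: "(2 * p) * (2 * q) = B * n^2"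
    by (simp_all add: algebra_simps power2_eq_square)
  have "n dvd 2 * p \<and> n dvd 2 * q"
    using dvd_coords_if_square_dvd_coords[OF d] re im by (metis dvd_triv_right)
  then obtain X Y where XY: "2 * p = n * X" "2 * q = n * Y" by (auto elim!: dvdE)
  have "n^2 * (X^2 - int d * Y^2) = n^2 * (2 * A)" "n^2 * (X * Y) = n^2 * B"
    using re im unfolding XY by (simp_all add: power_mult_distrib algebra_simps power2_eq_square)
  then have "X^2 - int d * Y^2 = 2 * A" "X * Y = B" using \<open>n \<noteq> 0\<close> by simp_all
  then have XY_coords: "integral_coords d X Y" using integral_coords_if_square[OF d AB(2)] by blast
  have "z = (of_int (2 * p) + of_int (2 * q) * ?r) / (2 * of_int n)"
    unfolding z using \<open>n \<noteq> 0\<close> by (simp add: field_simps)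
  also have "\<dots> = (of_int X + of_int Y * ?r) / 2"
    unfolding XY using \<open>n \<noteq> 0\<close> by (simp add: field_simps)
  finally show ?thesis using XY_coords O_d_iff_integral_coords by blast
qed

lemma norm_coords_pos:
  fixes A B :: int
  assumes "0 < d" "A \<noteq> 0 \<or> B \<noteq> 0"
  shows "0 < A^2 + int d * B^2"
  using assms by (auto intro: add_pos_nonneg add_nonneg_pos)

lemma O_d_divide_eq:
  assumes "0 < d" "\<alpha> \<in> O_d d" "\<beta> \<in> O_d d" "\<beta> \<noteq> 0"
  shows "\<exists>p q n. n \<noteq> 0 \<and> \<alpha> / \<beta> = (of_int p + of_int q * sqrt_neg d) / of_int n"
proof -
  let ?r = "sqrt_neg d"
  obtain A1 B1 A2 B2 where \<alpha>: "\<alpha> = (of_int A1 + of_int B1 * ?r) / 2"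
    and \<beta>: "\<beta> = (of_int A2 + of_int B2 * ?r) / 2"
    using assms(2,3) O_d_iff_integral_coords by meson
  \<comment> \<open>multiply numerator and denominator by the conjugate of 2 \<beta>, whose norm is n\<close>
  define n where "n = A2^2 + int d * B2^2"
  define P where "P = A1 * A2 + int d * B1 * B2"
  define Q where "Q = B1 * A2 - A1 * B2"
  have "A2 \<noteq> 0 \<or> B2 \<noteq> 0" using \<beta> assms(4) by auto
  then have "n \<noteq> 0" unfolding n_def using norm_coords_pos[OF \<open>0 < d\<close>] by (metis less_irrefl)
  have "(of_int P + of_int Q * ?r) * (of_int A2 + of_int B2 * ?r)
      = of_int n * (of_int A1 + of_int B1 * ?r) + of_int (Q * B2) * (?r^2 + of_nat d)"
    by (simp add: P_def Q_def n_def algebra_simps power2_eq_square)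
  then have "(of_int P + of_int Q * ?r) * (of_int A2 + of_int B2 * ?r)
      = of_int n * (of_int A1 + of_int B1 * ?r)"
    by (simp add: sqrt_neg_square)
  then have "(of_int P + of_int Q * ?r) * \<beta> = of_int n * \<alpha>"
    unfolding \<alpha> \<beta> by (metis times_divide_eq_right)
  then have "\<alpha> / \<beta> = (of_int P + of_int Q * ?r) / of_int n"
    using \<open>n \<noteq> 0\<close> assms(4) by (simp add: field_simps)
  then show ?thesis using \<open>n \<noteq> 0\<close> by blast
qed

lemma O_d_coords_unique:
  assumes d: "d \<in> class_one_d" and D: "is_discriminant d D" and s: "s^2 = D"
    and "p \<in> O_d d" "q \<in> O_d d" "p' \<in> O_d d" "q' \<in> O_d d"
    and eq: "p + q * s = p' + q' * s"
  shows "p = p' \<and> q = q'"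
proof (rule ccontr)
  assume "\<not> (p = p' \<and> q = q')"
  with eq have "q' - q \<noteq> 0" by auto
  moreover have "p - p' = s * (q' - q)" using eq by (simp add: algebra_simps)
  ultimately have "s = (p - p') / (q' - q)" by (simp add: field_simps)
  with \<open>q' - q \<noteq> 0\<close> obtain a b n where "n \<noteq> 0" "s = (of_int a + of_int b * sqrt_neg d) / of_int n"
    using O_d_divide_eq class_one_d_pos[OF d] O_d_diff assms(4-7) by metis
  moreover have "s^2 \<in> O_d d" using D s by (simp add: is_discriminant_def)
  ultimately have "s \<in> O_d d" using O_d_if_square_in_O_d[OF d] by blast
  then show False using D s by (auto simp: is_discriminant_def)
qed

lemma O_d_norm_ge_1:
  assumes "0 < d" "z \<in> O_d d" "z \<noteq> 0"
  shows "1 \<le> cmod z"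
proof -
  obtain A B where z: "z = (of_int A + of_int B * sqrt_neg d) / 2" and AB: "integral_coords d A B"
    using assms(2) O_d_iff_integral_coords by blast
  have "A \<noteq> 0 \<or> B \<noteq> 0" using z assms(3) by auto
  then have "0 < A^2 + int d * B^2" using \<open>0 < d\<close> by (rule norm_coords_pos[rotated])
  then have "4 \<le> A^2 + int d * B^2"
    using four_dvd_norm_if_integral_coords[OF AB] by (simp add: zdvd_imp_le)
  then have "(4::real) \<le> of_int (A^2 + int d * B^2)" by (metis of_int_le_iff of_int_numeral)
  moreover have "cmod z ^ 2 = of_int (A^2 + int d * B^2) / 4"
    unfolding cmod_power2 z by (simp add: sqrt_neg_def power_divide power_mult_distrib)
  ultimately have "1^2 \<le> cmod z ^ 2" by simp
  then show ?thesis by (rule power2_le_imp_le) simp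
qed

section \<open>The first powers of the fundamental solution\<close>

lemma sqrtD_square:
  assumes "D \<noteq> 0"
  shows "sqrtD D ^ 2 = D"
proof -
  let ?P = "\<lambda>s. s ^ 2 = D \<and> 0 \<le> Arg s \<and> Arg s < pi"
  obtain s where s: "?P s"
  proof (cases "0 \<le> Arg (csqrt D) \<and> Arg (csqrt D) < pi")
    case True
    then show ?thesis using that[of "csqrt D"] by simp
  next
    case False
    have "csqrt D \<noteq> 0" using assms by simp
    then have "0 \<le> Arg (- csqrt D) \<and> Arg (- csqrt D) < pi"
      using False Arg_minus Arg_le_pi[of "csqrt D"] mpi_less_Arg[of "csqrt D"] by (smt (verit))
    then show ?thesis using that[of "- csqrt D"] by simp
  qed
  have "?P (sqrtD D)" unfolding sqrtD_def
  proof (rule theI[of ?P s])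
    fix y assume y: "?P y"
    have "s \<noteq> 0" using s assms by auto
    have "y \<noteq> -s"
      using s y Arg_minus[OF \<open>s \<noteq> 0\<close>] by (auto split: if_splits)
    then show "y = s" using s y power2_eq_iff[of y s] by auto
  qed (fact s)
  then show ?thesis by blast
qed

lemma pell_unit_square:
  fixes t u s :: "'a::field_char_0"
  assumes "t^2 - u^2 * s^2 = 4"
  shows "((t + u * s) / 2)^2 = ((t^2 - 2) + t * u * s) / 2"
proof -
  have "((t + u * s) / 2)^2 - ((t^2 - 2) + t * u * s) / 2 = (u^2 * s^2 - t^2 + 4) / 4"
    by (simp add: field_simps power2_eq_square)
  also have "\<dots> = 0" using assms by (simp add: algebra_simps)
  finally show ?thesis by simp
qed

lemma pell_unit_cube:
  fixes t u s :: "'a::field_char_0"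
  assumes "t^2 - u^2 * s^2 = 4"
  shows "((t + u * s) / 2)^3 = ((t^3 - 3 * t) + u * (t^2 - 1) * s) / 2"
proof -
  have "((t + u * s) / 2)^3 - ((t^3 - 3 * t) + u * (t^2 - 1) * s) / 2
      = (3 * t + u * s) * (u^2 * s^2 - t^2 + 4) / 8"
    by (simp add: field_simps power2_eq_square power3_eq_cube)
  also have "\<dots> = 0" using assms by (simp add: algebra_simps)
  finally show ?thesis by simp
qed

lemma discriminant_nonzero: "is_discriminant d D \<Longrightarrow> D \<noteq> 0"
  by (auto simp: is_discriminant_def)

lemma fundamental_sol_u_nonzero:
  assumes "fundamental_sol d D t0 u0"
  shows "u0 \<noteq> 0"
proof
  assume "u0 = 0"
  then have "t0^2 = 2^2" using assms by (simp add: fundamental_sol_def pell_sol_def)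
  then have "t0 = 2 \<or> t0 = -2" by (metis power2_eq_iff)
  then have "cmod t0 = 2" by auto
  then have "cmod (eps_tu D t0 u0) = 1" using \<open>u0 = 0\<close> by (simp add: eps_tu_def norm_divide)
  then show False using assms by (simp add: fundamental_sol_def)
qed

lemma fundamental_power_coeffs:
  assumes d: "d \<in> class_one_d" and D: "is_discriminant d D" and pell: "pell_sol d D t0 u0"
    and seq: "\<forall>n. t n \<in> O_d d \<and> u n \<in> O_d d \<and>
                  eps_tu D t0 u0 ^ (n + 1) = (t n + u n * sqrtD D) / 2"
  shows "t 0 = t0 \<and> u 0 = u0"
    and "t 1 = t0^2 - 2 \<and> u 1 = t0 * u0"
    and "t 2 = t0^3 - 3 * t0 \<and> u 2 = u0 * (t0^2 - 1)"
proof -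
  let ?s = "sqrtD D"
  have s: "?s^2 = D" using sqrtD_square discriminant_nonzero[OF D] by blast
  have t0: "t0 \<in> O_d d" and u0: "u0 \<in> O_d d" and unit: "t0^2 - u0^2 * ?s^2 = 4"
    using pell s by (auto simp: pell_sol_def)
  have coeffs: "t n = x \<and> u n = y"
    if "eps_tu D t0 u0 ^ (n + 1) = (x + y * ?s) / 2" "x \<in> O_d d" "y \<in> O_d d" for n x y
  proof -
    have "t n + u n * ?s = x + y * ?s"
      using seq that(1) by (metis divide_cancel_right zero_neq_numeral)
    then show ?thesis using O_d_coords_unique[OF d D s] seq that(2,3) by blast
  qed
  show "t 0 = t0 \<and> u 0 = u0"
    using coeffs[OF _ t0 u0] by (simp add: eps_tu_def)
  have "eps_tu D t0 u0 ^ (1 + 1) = ((t0 + u0 * ?s) / 2)^2"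
    unfolding eps_tu_def one_add_one ..
  also have "\<dots> = ((t0^2 - 2) + (t0 * u0) * ?s) / 2"
    using pell_unit_square[OF unit] by (simp add: mult.assoc)
  finally show "t 1 = t0^2 - 2 \<and> u 1 = t0 * u0"
    by (rule coeffs) (intro O_d_diff O_d_mult O_d_power O_d_numeral t0 u0)+
  have "eps_tu D t0 u0 ^ (2 + 1) = ((t0 + u0 * ?s) / 2)^3"
    unfolding eps_tu_def by (simp add: numeral_3_eq_3 del: power_divide)
  also have "\<dots> = ((t0^3 - 3 * t0) + (u0 * (t0^2 - 1)) * ?s) / 2"
    using pell_unit_cube[OF unit] by (simp add: mult.assoc)
  finally show "t 2 = t0^3 - 3 * t0 \<and> u 2 = u0 * (t0^2 - 1)"
    by (rule coeffs) (intro O_d_diff O_d_mult O_d_power O_d_numeral O_d_one t0 u0)+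
qed

section \<open>Norm estimates\<close>

lemma pell_norm_bounds:
  fixes t u D :: complex
  assumes "t^2 - u^2 * D = 4"
  shows "cmod t ^ 2 \<le> 4 + cmod u ^ 2 * cmod D" and "cmod u ^ 2 * cmod D \<le> cmod t ^ 2 + 4"
proof -
  have "u^2 * D = t^2 - 4" using assms by (simp add: algebra_simps)
  then have "cmod u ^ 2 * cmod D = cmod (t^2 - 4)" by (metis norm_mult norm_power)
  then show "cmod t ^ 2 \<le> 4 + cmod u ^ 2 * cmod D" and "cmod u ^ 2 * cmod D \<le> cmod t ^ 2 + 4"
    using norm_triangle_ineq2[of "t^2" 4] norm_triangle_ineq4[of "t^2" 4]
      by (simp_all add: norm_power)
qed

lemma power_coeff_norm_bounds:
  fixes t u :: complex
  shows "cmod (t^2 - 2) \<le> cmod t ^ 2 + 2"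
    and "cmod (t^3 - 3 * t) \<le> cmod t * (cmod t ^ 2 + 3)"
    and "cmod u * (cmod t ^ 2 - 1) \<le> cmod (u * (t^2 - 1))"
    and "cmod (u * (t^2 - 1)) \<le> cmod u * (cmod t ^ 2 + 1)"
proof -
  show "cmod (t^2 - 2) \<le> cmod t ^ 2 + 2"
    using norm_triangle_ineq4[of "t^2" 2] by (simp add: norm_power)
  have "t^3 - 3 * t = t * (t^2 - 3)" by (simp add: algebra_simps power2_eq_square power3_eq_cube)
  then show "cmod (t^3 - 3 * t) \<le> cmod t * (cmod t ^ 2 + 3)"
    using norm_triangle_ineq4[of "t^2" 3] by (simp add: norm_mult norm_power mult_left_mono)
  show "cmod u * (cmod t ^ 2 - 1) \<le> cmod (u * (t^2 - 1))"
    using norm_triangle_ineq2[of "t^2" 1] by (simp add: norm_mult norm_power mult_left_mono)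
  show "cmod (u * (t^2 - 1)) \<le> cmod u * (cmod t ^ 2 + 1)"
    using norm_triangle_ineq4[of "t^2" 1] by (simp add: norm_mult norm_power mult_left_mono)
qed

lemma le_30_powr_three_halves:
  fixes S y :: real
  assumes "0 < S" "0 \<le> y" "y^2 \<le> 900 * S^3"
  shows "y \<le> 30 * S powr (3/2)"
proof (rule power2_le_imp_le)
  have "(S powr (3/2))^2 = S powr (3/2 + 3/2)" unfolding powr_add by (simp add: power2_eq_square)
  also have "\<dots> = S^3" using \<open>0 < S\<close> by (simp add: powr_numeral)
  finally have "(S powr (3/2))^2 = S^3" .
  then show "y^2 \<le> (30 * S powr (3/2))^2" using assms by (simp add: power_mult_distrib)
qed simp

lemma pell_first_coeff_bound:
  fixes a T S :: real
  assumes a: "a \<ge> 1" and S: "S \<ge> 200" and h0: "T \<ge> 4/9 * a^2" and up: "T^2 \<le> 4 + a^2 * S"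
  shows "T * a \<le> 30 * S powr (3/2)"
proof -
  define x where "x = a^2"
  have x1: "x \<ge> 1" using a unfolding x_def by (simp add: one_le_power)
  have "0 \<le> 4/9 * a^2" by simp
  then have T0: "T \<ge> 0" using h0 by linarith
  have "(4/9 * x)^2 \<le> T^2" using h0 x1 unfolding x_def by (intro power_mono) auto
  then have q: "16/81 * (x*x) \<le> 4 + x * S"
    using up unfolding x_def by (simp add: power2_eq_square algebra_simps)
  have x6: "x \<le> 6 * S"
  proof (rule ccontr)
    assume "\<not> x \<le> 6 * S"
    then have "(6 * S) * x < x * x" using x1 by (intro mult_strict_right_mono) auto
    then have "6 * (x * S) < x * x" by (simp add: ac_simps)
    moreover have "1 * S \<le> x * S" using x1 S by (intro mult_right_mono) auto
    ultimately show False using q S by simp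
  qed
  have "(T*a)^2 = T^2 * x" unfolding x_def by (simp add: power_mult_distrib)
  also have "\<dots> \<le> (4 + x*S) * x"
    using up x1 unfolding x_def by (intro mult_right_mono) (auto simp: algebra_simps)
  also have "\<dots> = 4*x + (x*x)*S" by (simp add: algebra_simps)
  also have "\<dots> \<le> 4*(6*S) + ((6*S)*(6*S))*S" using x6 x1 S
    by (intro add_mono mult_right_mono mult_mono) auto
  also have "\<dots> \<le> 900 * S^3"
  proof -
    have "1 * 1 \<le> S * S" using S by (intro mult_mono) auto
    then have "S * 1 \<le> S * (S * S)" using S by (intro mult_left_mono) auto
    moreover have "((6*S)*(6*S))*S = 36 * (S * (S * S))" by (simp add: algebra_simps)
    moreover have "S^3 = S * (S * S)" by (simp add: power3_eq_cube)
    ultimately show ?thesis using S by simp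
  qed
  finally show ?thesis using S T0 a by (intro le_30_powr_three_halves) auto
qed

lemma pell_coeffs_small_if_not_dominated:
  fixes a T S :: real
  assumes a: "a \<ge> 1" and S: "S \<ge> 200" and T0: "T \<ge> 0" and low: "a^2 * S \<le> T^2 + 4"
    and h1: "4/9 * (T * a)^2 \<le> T^2 + 2"
  shows "a^2 \<le> 3 \<and> 14 \<le> T"
proof -
  have x1: "1 \<le> a^2" using a by (simp add: one_le_power)
  have "1 * S \<le> a^2 * S" using x1 S by (intro mult_right_mono) auto
  then have T196: "196 \<le> T^2" using low S by linarith
  have "(14::real)^2 \<le> T^2" using T196 by simp
  then have "14 \<le> T" using T0 by (rule power2_le_imp_le)
  moreover have "a^2 \<le> 3"
  proof (rule ccontr)
    assume "\<not> a^2 \<le> 3"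
    then have "T^2 * 3 \<le> T^2 * a^2" by (intro mult_left_mono) auto
    moreover have "(T*a)^2 = T^2 * a^2" by (simp add: power_mult_distrib)
    ultimately show False using h1 T196 by linarith
  qed
  ultimately show ?thesis by simp
qed

lemma cubic_lt_quartic:
  fixes T :: real
  assumes T: "T \<ge> 14"
  shows "T * (T^2 + 3) < 4/9 * (T^2 - 1)^2"
proof -
  define c2 where "c2 = T * T"
  define c3 where "c3 = T * c2"
  define c4 where "c4 = T * c3"
  have f2: "14 * T \<le> c2" unfolding c2_def using T by (intro mult_right_mono) auto
  have c2p: "c2 \<ge> 0" using f2 T by linarith
  have f3: "14 * c2 \<le> c3" unfolding c3_def using T c2p by (intro mult_right_mono) auto
  have c3p: "c3 \<ge> 0" using f3 c2p by linarith
  have f4: "14 * c3 \<le> c4" unfolding c4_def using T c3p by (intro mult_right_mono) auto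
  have l: "T * (T^2 + 3) = c3 + 3 * T"
    unfolding c3_def c2_def by (simp add: power2_eq_square algebra_simps)
  have r: "(T^2 - 1)^2 = c4 - 2 * c2 + 1"
    unfolding c4_def c3_def c2_def by (simp add: power2_eq_square algebra_simps)
  have "9 * c3 + 27 * T < 4 * c4 - 8 * c2 + 4" using f2 f3 f4 T by linarith
  then show ?thesis unfolding l r by (simp add: field_simps)
qed

lemma pell_second_coeff_bound:
  fixes a T S :: real
  assumes a0: "a \<ge> 0" and a3: "a^2 \<le> 3" and S: "S \<ge> 200" and up: "T^2 \<le> 4 + a^2 * S"
  shows "a * (T^2 + 1) \<le> 30 * S powr (3/2)"
proof -
  have a2: "a \<le> 2"
  proof (rule ccontr)
    assume "\<not> a \<le> 2"
    then have "2^2 < a^2" by (intro power_strict_mono) auto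
    then show False using a3 by simp
  qed
  have "a^2 * S \<le> 3 * S" using a3 S by (intro mult_right_mono) auto
  then have Tb: "T^2 + 1 \<le> 5 + 3 * S" using up by linarith
  have "a * (T^2 + 1) \<le> 2 * (5 + 3 * S)" using a2 a0 Tb by (intro mult_mono) auto
  then have "a * (T^2 + 1) \<le> 10 + 6 * S" by simp
  moreover have "S powr 1 \<le> S powr (3/2)" using S by (intro powr_mono) auto
  then have "S \<le> S powr (3/2)" using S by simp
  ultimately show ?thesis using S by linarith
qed

lemma least_dominated_index_bound:
  fixes \<tau> \<upsilon> :: "nat \<Rightarrow> real" and T a S :: real
  assumes a: "1 \<le> a" and S: "200 \<le> S" and T: "0 \<le> T"
    and pell_up: "T^2 \<le> 4 + a^2 * S" and pell_low: "a^2 * S \<le> T^2 + 4"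
    and \<tau>0: "\<tau> 0 = T" and \<upsilon>0: "\<upsilon> 0 = a"
    and \<tau>1: "\<tau> 1 \<le> T^2 + 2" and \<upsilon>1: "\<upsilon> 1 = T * a"
    and \<tau>2: "\<tau> 2 \<le> T * (T^2 + 3)"
    and \<upsilon>2: "a * (T^2 - 1) \<le> \<upsilon> 2" "\<upsilon> 2 \<le> a * (T^2 + 1)"
  shows "let m = (LEAST n. \<tau> n < 4 / 9 * \<upsilon> n ^ 2) in
           (\<exists>n. \<tau> n < 4 / 9 * \<upsilon> n ^ 2) \<and> m \<le> 2 \<and>
           (m \<noteq> 0 \<longrightarrow> \<upsilon> m \<le> 30 * S powr (3 / 2))"
proof -
  define P where "P n \<longleftrightarrow> \<tau> n < 4 / 9 * \<upsilon> n ^ 2" for n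
  have "(\<exists>n. P n) \<and> (LEAST n. P n) \<le> 2 \<and>
    ((LEAST n. P n) \<noteq> 0 \<longrightarrow> \<upsilon> (LEAST n. P n) \<le> 30 * S powr (3 / 2))"
  proof (cases "P 0")
    case True
    then have "(LEAST n. P n) = 0" by (rule Least_eq_0)
    with True show ?thesis by auto
  next
    case not0: False
    then have h0: "4/9 * a^2 \<le> T" using \<tau>0 \<upsilon>0 unfolding P_def by simp
    show ?thesis
    proof (cases "P 1")
      case True
      then have "(LEAST n. P n) = 1"
        using not0 by (intro Least_equality) (auto simp: Suc_le_eq intro: gr0I)
      moreover have "\<upsilon> 1 \<le> 30 * S powr (3/2)"
        unfolding \<upsilon>1 by (rule pell_first_coeff_bound[OF a S h0 pell_up])
      ultimately show ?thesis using True by auto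
    next
      case not1: False
      then have "4/9 * (T * a)^2 \<le> T^2 + 2" using \<tau>1 \<upsilon>1 unfolding P_def by simp
      then have small: "a^2 \<le> 3 \<and> 14 \<le> T"
        using pell_coeffs_small_if_not_dominated[OF a S T pell_low] by blast
      then have "0 \<le> T^2 - 1" using one_le_power[of T 2] by simp
      then have "1 * (T^2 - 1) \<le> a * (T^2 - 1)" using a by (intro mult_right_mono)
      then have "T^2 - 1 \<le> \<upsilon> 2" using \<upsilon>2(1) by simp
      then have "(T^2 - 1)^2 \<le> \<upsilon> 2 ^ 2" using \<open>0 \<le> T^2 - 1\<close> by (rule power_mono)
      moreover have "\<tau> 2 < 4/9 * (T^2 - 1)^2" using \<tau>2 cubic_lt_quartic[of T] small by linarith
      ultimately have P2: "P 2" unfolding P_def by linarith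
      moreover have "2 \<le> n" if "P n" for n
      proof (rule ccontr)
        assume "\<not> 2 \<le> n"
        then have "n = 0 \<or> n = 1" by auto
        then show False using that not0 not1 by auto
      qed
      ultimately have "(LEAST n. P n) = 2" by (rule Least_equality)
      moreover have "\<upsilon> 2 \<le> 30 * S powr (3/2)"
        using a small
        by (intro order_trans[OF \<upsilon>2(2) pell_second_coeff_bound[OF _ _ S pell_up]]) auto
      ultimately show ?thesis using P2 by auto
    qed
  qed
  then show ?thesis unfolding P_def Let_def .
qed

theorem lemma4p6:
  fixes d :: nat
  assumes "d \<in> class_one_d"
  shows "\<exists>N::real. N > 0 \<and>
    (\<forall>D t0 u0 (t::nat \<Rightarrow> complex) (u::nat \<Rightarrow> complex).
       is_discriminant d D \<and> cmod D > N \<and> fundamental_sol d D t0 u0 \<and>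
       (\<forall>n. t n \<in> O_d d \<and> u n \<in> O_d d \<and>
            eps_tu D t0 u0 ^ (n + 1) = (t n + u n * sqrtD D) / 2)
     \<longrightarrow> (let m = (LEAST n. cmod (t n) < 4 / 9 * cmod (u n) ^ 2) in
           (\<exists>n. cmod (t n) < 4 / 9 * cmod (u n) ^ 2) \<and> m \<le> 2 \<and>
           (m \<noteq> 0 \<longrightarrow> cmod (u m) \<le> 30 * cmod D powr (3 / 2))))"
proof (intro exI[of _ 200] conjI allI impI)
  fix D t0 u0 and t u :: "nat \<Rightarrow> complex"
  assume "is_discriminant d D \<and> 200 < cmod D \<and> fundamental_sol d D t0 u0 \<and>
    (\<forall>n. t n \<in> O_d d \<and> u n \<in> O_d d \<and> eps_tu D t0 u0 ^ (n + 1) = (t n + u n * sqrtD D) / 2)"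
  then have D: "is_discriminant d D" and big: "200 < cmod D" and fund: "fundamental_sol d D t0 u0"
    and seq: "\<forall>n. t n \<in> O_d d \<and> u n \<in> O_d d \<and> eps_tu D t0 u0 ^ (n + 1) = (t n + u n * sqrtD D) / 2"
    by blast+
  have pell: "pell_sol d D t0 u0" using fund by (simp add: fundamental_sol_def)
  then have unit: "t0^2 - u0^2 * D = 4" by (simp add: pell_sol_def)
  have "1 \<le> cmod u0"
    using O_d_norm_ge_1 class_one_d_pos[OF assms] pell fundamental_sol_u_nonzero[OF fund]
    by (simp add: pell_sol_def)
  note coeffs = fundamental_power_coeffs[OF assms D pell seq]
  show "let m = (LEAST n. cmod (t n) < 4 / 9 * cmod (u n) ^ 2) in
           (\<exists>n. cmod (t n) < 4 / 9 * cmod (u n) ^ 2) \<and> m \<le> 2 \<and>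
           (m \<noteq> 0 \<longrightarrow> cmod (u m) \<le> 30 * cmod D powr (3 / 2))"
    by (rule least_dominated_index_bound[OF \<open>1 \<le> cmod u0\<close>])
      (use big pell_norm_bounds[OF unit] power_coeff_norm_bounds(1,2)[where t = t0]
        power_coeff_norm_bounds(3,4)[where t = t0 and u = u0] coeffs
        in \<open>simp_all add: norm_mult\<close>)
qed simp

end
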